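(* Let $0<a\le 1$, let $k\ge 1$, and let $z_1,\dots,z_k\in\mathbb{C}$ be pairwise distinct with $|z_j|\le 1$ and $z_j\neq a$ for $j=1,\dots,k$. Let $r_1,\dots,r_k\ge 0$ be integers (independent of $n$), and for each integer $n\ge 2$ let $s_1(n),\dots,s_k(n)$ be integers with $0\le s_j(n)\le n-1$. Assume: (i) $r_j+s_j(n)\ge 1$ for all $j=1,\dots,k$ and all $n\ge 2$, and $r_j\ge 1$ for some $j\in\{1,\dots,k\}$; (ii) $s_j(n)/n\to 0$ as $n\to\infty$ for each $j\in\{1,\dots,k\}$; (iii) with $X=\{j\in\{1,\dots,k\}: r_j\ge 1\}$ and $P(z)=(z-a)\prod_{j\in X}(z-z_j)^{r_j}$, there exists $\zeta\in\mathbb{C}$ with $|\zeta|\le 1$, $P'(\zeta)=0$ and $|a-\zeta|<1$. For $n\ge 2$ let $n_j=r_jn+s_j(n)$ and $$p_n(z)=(z-a)^n\prod_{j=1}^{k}(z-z_j)^{n_j},\quad z\in\mathbb{C}.$$ Then there exists an integer $n_0$ such that for every $n\ge n_0$ there exists $\zeta\neq a$ with $p_n'(\zeta)=0$ and $|a-\zeta|<1$. *)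

theory Defs
  imports "HOL-Analysis.Analysis"
begin

end

theory Submission
  imports Defs "HOL-Computational_Algebra.Fundamental_Theorem_Algebra"
begin

(* Write N_j = r_j n + s_j(n) and c_j = N_j / n. Clearing denominators in the logarithmic derivative
   gives p_n'(w) = n (w - a)^(n-1) (\<Prod>j. (w - z_j)^(N_j - 1)) G_c(w) for the polynomial
   G_c(w) = \<Prod>j (w - z_j) + (w - a) \<Sum>j c_j \<Prod>i<>j (w - z_i), and likewise
   P'(w) = (\<Prod>j\<in>X. (w - z_j)^(r_j - 1)) G_r(w) with the product over X only.
   So at the critical point \<zeta> of P, either \<zeta> = z_j with r_j >= 2, and then \<zeta> is a multiple zero and
   hence a critical point of every p_n, or G_r(\<zeta>) = 0. In the second case G_c(\<zeta>) -> 0 since c_j -> r_j.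
   As G_c has degree k and leading coefficient 1 + \<Sum>j c_j >= 1, factoring it over the complex numbers shows
   that |G_c(\<zeta>)| < \<epsilon>^k forces a root within \<epsilon> of \<zeta>. For large n this root \<rho> satisfies
   |a - \<rho>| < 1, it is a critical point of p_n, and \<rho> <> a because G_c(a) = \<Prod>j (a - z_j) <> 0. *)

lemma poly_exists_root_near:
  fixes p :: "complex poly"
  assumes small: "norm (poly p x) < norm (lead_coeff p) * e ^ degree p" and "0 < e"
  shows "\<exists>\<rho>. poly p \<rho> = 0 \<and> norm (x - \<rho>) < e"
proof (rule ccontr)
  assume far: "\<not> ?thesis"
  obtain \<rho> where p_eq: "smult (lead_coeff p) (\<Prod>i<degree p. [:-\<rho> i, 1:]) = p"
    by (rule complex_poly_decompose')
  have poly_p: "poly p w = lead_coeff p * (\<Prod>i<degree p. w - \<rho> i)" for w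
    by (subst p_eq[symmetric]) (simp add: poly_prod)
  have "e \<le> norm (x - \<rho> i)" if "i < degree p" for i
    using far that by (force simp: poly_p)
  then have "e ^ degree p \<le> (\<Prod>i<degree p. norm (x - \<rho> i))"
    using prod_mono[of "{..<degree p}" "\<lambda>_. e"] \<open>0 < e\<close> by simp
  then have "norm (lead_coeff p) * e ^ degree p \<le> norm (poly p x)"
    by (simp add: poly_p norm_mult prod_norm mult_left_mono)
  with small show False by simp
qed

lemma tendsto_affine_ratio:
  assumes "(\<lambda>n. real (s n) / real n) \<longlonglongrightarrow> 0"
  shows "(\<lambda>n. real (r * n + s n) / real n) \<longlonglongrightarrow> real r"
proof (rule Lim_transform_eventually)
  show "(\<lambda>n. real r + real (s n) / real n) \<longlonglongrightarrow> real r"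
    using tendsto_add[OF tendsto_const assms] by simp
  show "\<forall>\<^sub>F n in sequentially. real r + real (s n) / real n = real (r * n + s n) / real n"
    using eventually_gt_at_top[of 0] by eventually_elim (simp add: field_simps)
qed

lemma eventually_ge_of_ratio_tendsto:
  fixes m :: "nat \<Rightarrow> nat"
  assumes "(\<lambda>n. real (m n) / real n) \<longlonglongrightarrow> c" "0 < c"
  shows "\<forall>\<^sub>F n in sequentially. m n \<ge> N"
proof -
  have "filterlim (\<lambda>n. real (m n)) at_top sequentially"
  proof (rule filterlim_at_top_mono)
    show "filterlim (\<lambda>n. real (m n) / real n * real n) at_top sequentially"
      by (rule filterlim_tendsto_pos_mult_at_top[OF assms filterlim_real_sequentially])
    show "\<forall>\<^sub>F n in sequentially. real (m n) / real n * real n \<le> real (m n)"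
      using eventually_gt_at_top[of 0] by eventually_elim simp
  qed
  then have "\<forall>\<^sub>F n in sequentially. real N \<le> real (m n)"
    unfolding filterlim_at_top by (rule spec)
  then show ?thesis
    by simp
qed

lemma sum_prod_powers_factor:
  fixes f :: "'i \<Rightarrow> 'a :: comm_semiring_1"
  assumes "finite J" "\<And>j. j \<in> J \<Longrightarrow> m j \<ge> 1"
  shows "(\<Sum>j\<in>J. of_nat (m j) * f j ^ (m j - 1) * (\<Prod>i\<in>J-{j}. f i ^ m i))
       = (\<Prod>j\<in>J. f j ^ (m j - 1)) * (\<Sum>j\<in>J. of_nat (m j) * (\<Prod>i\<in>J-{j}. f i))"
proof -
  have summand: "f j ^ (m j - 1) * (\<Prod>i\<in>J-{j}. f i ^ m i)
      = (\<Prod>i\<in>J. f i ^ (m i - 1)) * (\<Prod>i\<in>J-{j}. f i)" if "j \<in> J" for j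
  proof -
    have "f i ^ m i = f i ^ (m i - 1) * f i" if "i \<in> J" for i
      using power_minus_mult[of "m i" "f i"] assms(2)[OF that] by simp
    then have "(\<Prod>i\<in>J-{j}. f i ^ m i) = (\<Prod>i\<in>J-{j}. f i ^ (m i - 1)) * (\<Prod>i\<in>J-{j}. f i)"
      unfolding prod.distrib[symmetric] by (intro prod.cong) auto
    moreover have "(\<Prod>i\<in>J. f i ^ (m i - 1)) = f j ^ (m j - 1) * (\<Prod>i\<in>J-{j}. f i ^ (m i - 1))"
      by (rule prod.remove[OF assms(1) that])
    ultimately show ?thesis
      by (simp only: mult.assoc)
  qed
  have "(\<Sum>j\<in>J. of_nat (m j) * f j ^ (m j - 1) * (\<Prod>i\<in>J-{j}. f i ^ m i))
      = (\<Sum>j\<in>J. of_nat (m j) * ((\<Prod>i\<in>J. f i ^ (m i - 1)) * (\<Prod>i\<in>J-{j}. f i)))"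
    by (rule sum.cong) (simp_all only: mult.assoc summand)
  also have "\<dots> = (\<Prod>j\<in>J. f j ^ (m j - 1)) * (\<Sum>j\<in>J. of_nat (m j) * (\<Prod>i\<in>J-{j}. f i))"
    unfolding sum_distrib_left by (rule sum.cong) (rule refl, rule mult.left_commute)
  finally show ?thesis .
qed

(* The numerator of 1/(w - a) + (\<Sum>j\<in>J. c j / (w - z j)) over the denominator (w - a) (\<Prod>j\<in>J. w - z j). *)
definition crit_poly :: "complex \<Rightarrow> ('i \<Rightarrow> complex) \<Rightarrow> ('i \<Rightarrow> real) \<Rightarrow> 'i set \<Rightarrow> complex poly"
  where "crit_poly a z c J = (\<Prod>j\<in>J. [:- z j, 1:])
    + (\<Sum>j\<in>J. smult (of_real (c j)) ([:- a, 1:] * (\<Prod>i\<in>J-{j}. [:- z i, 1:])))"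

lemma poly_crit_poly:
  "poly (crit_poly a z c J) w
     = (\<Prod>j\<in>J. w - z j) + (w - a) * (\<Sum>j\<in>J. of_real (c j) * (\<Prod>i\<in>J-{j}. w - z i))"
  by (simp add: crit_poly_def poly_sum poly_prod sum_distrib_left algebra_simps)

lemma crit_poly_degree_lead_coeff:
  assumes "finite J" "\<And>j. j \<in> J \<Longrightarrow> c j \<ge> 0"
  shows "degree (crit_poly a z c J) = card J
    \<and> lead_coeff (crit_poly a z c J) = of_real (1 + (\<Sum>j\<in>J. c j))"
proof -
  have monic_prod: "degree (\<Prod>i\<in>K. [:- z i, 1:]) = card K \<and> coeff (\<Prod>i\<in>K. [:- z i, 1:]) (card K) = 1"
    for K
  proof -
    have deg: "degree (\<Prod>i\<in>K. [:- z i, 1:]) = card K"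
      by (simp add: degree_prod_sum_eq)
    have "lead_coeff (\<Prod>i\<in>K. [:- z i, 1:]) = (\<Prod>i\<in>K. lead_coeff [:- z i, 1:])"
      by (rule lead_coeff_prod)
    with deg show ?thesis by simp
  qed
  have monic_shifted: "degree ([:- a, 1:] * (\<Prod>i\<in>J-{j}. [:- z i, 1:])) = card J
    \<and> coeff ([:- a, 1:] * (\<Prod>i\<in>J-{j}. [:- z i, 1:])) (card J) = 1" if "j \<in> J" for j
  proof -
    let ?P = "\<Prod>i\<in>J-{j}. [:- z i, 1:]"
    have "?P \<noteq> 0" using monic_prod[of "J - {j}"] by auto
    then have deg: "degree ([:- a, 1:] * ?P) = card J"
      using monic_prod[of "J - {j}"] card_Suc_Diff1[OF assms(1) that] by (subst degree_mult_eq) auto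
    have "lead_coeff ([:- a, 1:] * ?P) = 1"
      unfolding lead_coeff_mult using monic_prod[of "J - {j}"] by simp
    with deg show ?thesis by simp
  qed
  have deg_le: "degree (crit_poly a z c J) \<le> card J"
    unfolding crit_poly_def using monic_prod[of J] monic_shifted
    by (intro degree_add_le degree_sum_le assms(1) order.trans[OF degree_smult_le]) auto
  have coeff: "coeff (crit_poly a z c J) (card J) = of_real (1 + (\<Sum>j\<in>J. c j))"
    unfolding crit_poly_def coeff_add coeff_sum coeff_smult using monic_prod[of J] monic_shifted
    by (simp add: of_real_sum)
  have "0 < 1 + (\<Sum>j\<in>J. c j)"
    using assms(2) by (simp add: sum_nonneg add_pos_nonneg)
  then have "coeff (crit_poly a z c J) (card J) \<noteq> 0"
    unfolding coeff of_real_eq_0_iff by simp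
  then have "degree (crit_poly a z c J) = card J"
    using deg_le le_degree by (intro antisym)
  with coeff show ?thesis by simp
qed

lemma tendsto_poly_crit_poly:
  assumes "\<And>j. j \<in> J \<Longrightarrow> (\<lambda>n. c n j) \<longlonglongrightarrow> c' j"
  shows "(\<lambda>n. poly (crit_poly a z (c n) J) w) \<longlonglongrightarrow> poly (crit_poly a z c' J) w"
  unfolding poly_crit_poly by (intro tendsto_intros assms)

lemma poly_crit_poly_zero_weights:
  assumes "finite J" "X \<subseteq> J" "\<And>j. j \<in> J - X \<Longrightarrow> c j = 0"
  shows "poly (crit_poly a z c J) w = poly (crit_poly a z c X) w * (\<Prod>j\<in>J-X. w - z j)"
proof -
  have split: "(\<Prod>i\<in>K. w - z i) = (\<Prod>i\<in>K-(J-X). w - z i) * (\<Prod>i\<in>J-X. w - z i)"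
    if "J - X \<subseteq> K" "K \<subseteq> J" for K
    using prod.subset_diff[OF that(1)] finite_subset[OF that(2) assms(1)] by simp
  have "(\<Sum>j\<in>J. of_real (c j) * (\<Prod>i\<in>J-{j}. w - z i))
      = (\<Sum>j\<in>X. of_real (c j) * (\<Prod>i\<in>J-{j}. w - z i))"
    using assms by (intro sum.mono_neutral_right) auto
  also have "\<dots> = (\<Sum>j\<in>X. of_real (c j) * (\<Prod>i\<in>X-{j}. w - z i)) * (\<Prod>i\<in>J-X. w - z i)"
    unfolding sum_distrib_right
  proof (rule sum.cong)
    fix j assume "j \<in> X"
    then have "J - {j} - (J - X) = X - {j}" using assms(2) by auto
    with \<open>j \<in> X\<close> show "of_real (c j) * (\<Prod>i\<in>J-{j}. w - z i)
        = of_real (c j) * (\<Prod>i\<in>X-{j}. w - z i) * (\<Prod>i\<in>J-X. w - z i)"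
      using split[of "J - {j}"] by auto
  qed simp
  moreover have "J - (J - X) = X" using assms(2) by auto
  ultimately show ?thesis
    using split[of J] by (simp add: poly_crit_poly algebra_simps)
qed

lemma deriv_power_prod:
  fixes a :: complex and z :: "'i \<Rightarrow> complex"
  assumes "finite J" "n \<ge> 1" "\<And>j. j \<in> J \<Longrightarrow> m j \<ge> 1"
  shows "deriv (\<lambda>w. (w - a) ^ n * (\<Prod>j\<in>J. (w - z j) ^ m j)) w
       = of_nat n * (w - a) ^ (n - 1) * (\<Prod>j\<in>J. (w - z j) ^ (m j - 1))
         * poly (crit_poly a z (\<lambda>j. real (m j) / real n) J) w"
proof -
  define Q where "Q = (\<Prod>j\<in>J. w - z j)"
  define R where "R = (\<Prod>j\<in>J. (w - z j) ^ (m j - 1))"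
  define S where "S = (\<Sum>j\<in>J. of_nat (m j) * (\<Prod>i\<in>J-{j}. w - z i))"
  define T where "T = (\<Sum>j\<in>J. of_real (real (m j) / real n) * (\<Prod>i\<in>J-{j}. w - z i))"
  have "(w - z j) ^ m j = (w - z j) ^ (m j - 1) * (w - z j)" if "j \<in> J" for j
    using power_minus_mult[of "m j" "w - z j"] assms(3)[OF that] by simp
  then have RQ: "(\<Prod>j\<in>J. (w - z j) ^ m j) = R * Q"
    unfolding R_def Q_def prod.distrib[symmetric] by (intro prod.cong) auto
  have RS: "(\<Sum>j\<in>J. of_nat (m j) * (w - z j) ^ (m j - 1) * (\<Prod>i\<in>J-{j}. (w - z i) ^ m i)) = R * S"
    unfolding R_def S_def by (rule sum_prod_powers_factor[OF assms(1,3)])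
  have "S = of_nat n * T"
    unfolding S_def T_def sum_distrib_left by (rule sum.cong) (use assms(2) in auto)
  then have crit: "of_nat n * poly (crit_poly a z (\<lambda>j. real (m j) / real n) J) w
      = of_nat n * Q + (w - a) * S"
    unfolding poly_crit_poly Q_def[symmetric] T_def[symmetric] by (simp add: algebra_simps)
  have power: "((\<lambda>w. (w - c) ^ N) has_field_derivative of_nat N * (w - c) ^ (N - 1)) (at w)"
    for c :: complex and N
    by (auto intro!: derivative_eq_intros)
  have pow: "(w - a) ^ n = (w - a) ^ (n - 1) * (w - a)"
    using power_minus_mult[of n "w - a"] assms(2) by simp
  have "deriv (\<lambda>w. (w - a) ^ n * (\<Prod>j\<in>J. (w - z j) ^ m j)) w
      = (w - a) ^ n * (\<Sum>j\<in>J. of_nat (m j) * (w - z j) ^ (m j - 1) * (\<Prod>i\<in>J-{j}. (w - z i) ^ m i))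
        + of_nat n * (w - a) ^ (n - 1) * (\<Prod>j\<in>J. (w - z j) ^ m j)"
    by (rule DERIV_imp_deriv, rule DERIV_mult'[OF power has_field_derivative_prod]) (rule power)
  also have "\<dots> = (w - a) ^ (n - 1) * R * (of_nat n * Q + (w - a) * S)"
    unfolding RS RQ pow by (simp add: algebra_simps)
  also have "\<dots> = of_nat n * (w - a) ^ (n - 1) * R * poly (crit_poly a z (\<lambda>j. real (m j) / real n) J) w"
    unfolding crit[symmetric] by (simp only: mult_ac)
  finally show ?thesis
    unfolding R_def .
qed

lemma deriv_power_prod_multiple_root:
  fixes a :: complex and z :: "'i \<Rightarrow> complex"
  assumes "finite J" "n \<ge> 1" "\<And>j. j \<in> J \<Longrightarrow> m j \<ge> 1" "j0 \<in> J" "m j0 \<ge> 2"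
  shows "deriv (\<lambda>w. (w - a) ^ n * (\<Prod>j\<in>J. (w - z j) ^ m j)) (z j0) = 0"
proof -
  have "(\<Prod>j\<in>J. (z j0 - z j) ^ (m j - 1)) = 0"
    using assms(1,4,5) by (auto simp: prod_zero_iff intro!: bexI[of _ j0])
  then show ?thesis
    by (simp add: deriv_power_prod[OF assms(1-3)])
qed

lemma crit_point_cases:
  fixes a :: complex and z :: "'i \<Rightarrow> complex"
  assumes "finite X" "\<And>j. j \<in> X \<Longrightarrow> r j \<ge> 1"
    and "deriv (\<lambda>w. (w - a) * (\<Prod>j\<in>X. (w - z j) ^ r j)) \<zeta> = 0"
  obtains (multiple_root) j0 where "j0 \<in> X" "\<zeta> = z j0" "r j0 \<ge> 2"
    | (crit_poly_root) "poly (crit_poly a z (\<lambda>j. real (r j)) X) \<zeta> = 0"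
proof -
  have "(\<Prod>j\<in>X. (\<zeta> - z j) ^ (r j - 1)) * poly (crit_poly a z (\<lambda>j. real (r j)) X) \<zeta> = 0"
    using assms(3) deriv_power_prod[OF assms(1), of 1 r a z \<zeta>] assms(2) by simp
  then have "(\<exists>j0\<in>X. \<zeta> = z j0 \<and> r j0 \<ge> 2) \<or> poly (crit_poly a z (\<lambda>j. real (r j)) X) \<zeta> = 0"
    using assms(1,2) by (auto simp: prod_zero_iff)
  with that show ?thesis
    by blast
qed

lemma eventually_crit_point_near_crit_poly_root:
  fixes a :: complex and z :: "'i \<Rightarrow> complex" and m :: "nat \<Rightarrow> 'i \<Rightarrow> nat"
  assumes "finite J" "a \<notin> z ` J" "0 < e"
    and lim: "\<And>j. j \<in> J \<Longrightarrow> (\<lambda>n. real (m n j) / real n) \<longlonglongrightarrow> c j"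
    and mult_pos: "\<forall>\<^sub>F n in sequentially. \<forall>j\<in>J. m n j \<ge> 1"
    and root: "poly (crit_poly a z c J) \<zeta> = 0"
  shows "\<forall>\<^sub>F n in sequentially. \<exists>\<rho>. \<rho> \<noteq> a \<and> norm (\<zeta> - \<rho>) < e
           \<and> deriv (\<lambda>w. (w - a) ^ n * (\<Prod>j\<in>J. (w - z j) ^ m n j)) \<rho> = 0"
proof -
  define G where "G n = crit_poly a z (\<lambda>j. real (m n j) / real n) J" for n
  have "(\<lambda>n. poly (G n) \<zeta>) \<longlonglongrightarrow> 0"
    using tendsto_poly_crit_poly[of J "\<lambda>n j. real (m n j) / real n" c a z \<zeta>, OF lim] root
    unfolding G_def by simp
  from order_tendstoD(2)[OF tendsto_norm_zero[OF this], of "e ^ card J"]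
  have small: "\<forall>\<^sub>F n in sequentially. norm (poly (G n) \<zeta>) < e ^ card J"
    using \<open>0 < e\<close> by simp
  have "\<forall>\<^sub>F n in sequentially. n \<ge> 1"
    by (rule eventually_ge_at_top)
  with small mult_pos show ?thesis
  proof eventually_elim
    case (elim n)
    then have small_n: "norm (poly (G n) \<zeta>) < e ^ card J"
      and m_pos: "\<And>j. j \<in> J \<Longrightarrow> m n j \<ge> 1" and "n \<ge> 1" by auto
    have "degree (G n) = card J" and lead: "lead_coeff (G n) = of_real (1 + (\<Sum>j\<in>J. real (m n j) / real n))"
      using crit_poly_degree_lead_coeff[OF assms(1), of "\<lambda>j. real (m n j) / real n" a z]
      unfolding G_def by auto
    moreover have "1 \<le> norm (lead_coeff (G n))"
      unfolding lead norm_of_real by (simp add: sum_nonneg)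
    ultimately have "e ^ card J \<le> norm (lead_coeff (G n)) * e ^ degree (G n)"
      using mult_right_mono[of 1 "norm (lead_coeff (G n))" "e ^ card J"] \<open>0 < e\<close> by simp
    then obtain \<rho> where root_n: "poly (G n) \<rho> = 0" and near: "norm (\<zeta> - \<rho>) < e"
      using poly_exists_root_near[of "G n" \<zeta> e] small_n \<open>0 < e\<close> by auto
    have "poly (G n) a = (\<Prod>j\<in>J. a - z j)"
      unfolding G_def poly_crit_poly by simp
    also have "\<dots> \<noteq> 0"
      using assms(1,2) by (auto simp: prod_zero_iff)
    finally have "\<rho> \<noteq> a"
      using root_n by auto
    moreover have "deriv (\<lambda>w. (w - a) ^ n * (\<Prod>j\<in>J. (w - z j) ^ m n j)) \<rho> = 0"
      using deriv_power_prod[OF assms(1) \<open>n \<ge> 1\<close> m_pos] root_n unfolding G_def by simp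
    ultimately show ?case
      using near by blast
  qed
qed

lemma eventually_crit_point_near:
  fixes a :: complex and z :: "'i \<Rightarrow> complex" and m :: "nat \<Rightarrow> 'i \<Rightarrow> nat"
  assumes "finite J" "a \<notin> z ` J" "0 < e"
    and lim: "\<And>j. j \<in> J \<Longrightarrow> (\<lambda>n. real (m n j) / real n) \<longlonglongrightarrow> real (r j)"
    and mult_pos: "\<forall>\<^sub>F n in sequentially. \<forall>j\<in>J. m n j \<ge> 1"
    and crit: "deriv (\<lambda>w. (w - a) * (\<Prod>j\<in>{j\<in>J. r j \<ge> 1}. (w - z j) ^ r j)) \<zeta> = 0"
  shows "\<forall>\<^sub>F n in sequentially. \<exists>\<rho>. \<rho> \<noteq> a \<and> norm (\<zeta> - \<rho>) < e
           \<and> deriv (\<lambda>w. (w - a) ^ n * (\<Prod>j\<in>J. (w - z j) ^ m n j)) \<rho> = 0"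
proof -
  define X where "X = {j\<in>J. r j \<ge> 1}"
  have "finite X" "X \<subseteq> J" and r_pos: "\<And>j. j \<in> X \<Longrightarrow> r j \<ge> 1"
    using assms(1) by (auto simp: X_def)
  show ?thesis
  proof (rule crit_point_cases[OF \<open>finite X\<close> r_pos crit[folded X_def]])
    fix j0 assume multiple_root: "j0 \<in> X" "\<zeta> = z j0" "r j0 \<ge> 2"
    with \<open>X \<subseteq> J\<close> have "j0 \<in> J" by auto
    have "\<forall>\<^sub>F n in sequentially. m n j0 \<ge> 2"
      using multiple_root \<open>j0 \<in> J\<close> by (intro eventually_ge_of_ratio_tendsto[OF lim]) auto
    moreover have "\<forall>\<^sub>F n in sequentially. n \<ge> 1"
      by (rule eventually_ge_at_top)
    ultimately show ?thesis
      using mult_pos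
    proof eventually_elim
      case (elim n)
      then have "deriv (\<lambda>w. (w - a) ^ n * (\<Prod>j\<in>J. (w - z j) ^ m n j)) (z j0) = 0"
        using \<open>j0 \<in> J\<close> by (intro deriv_power_prod_multiple_root[OF assms(1)]) auto
      moreover have "z j0 \<noteq> a"
        using assms(2) \<open>j0 \<in> J\<close> by auto
      ultimately show ?case
        using multiple_root(2) \<open>0 < e\<close> by auto
    qed
  next
    assume crit_poly_root: "poly (crit_poly a z (\<lambda>j. real (r j)) X) \<zeta> = 0"
    have "poly (crit_poly a z (\<lambda>j. real (r j)) J) \<zeta>
        = poly (crit_poly a z (\<lambda>j. real (r j)) X) \<zeta> * (\<Prod>j\<in>J-X. \<zeta> - z j)"
      by (rule poly_crit_poly_zero_weights) (use assms(1) in \<open>auto simp: X_def\<close>)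
    with crit_poly_root have "poly (crit_poly a z (\<lambda>j. real (r j)) J) \<zeta> = 0"
      by simp
    then show ?thesis
      using eventually_crit_point_near_crit_poly_root[OF assms(1-3) lim mult_pos] by simp
  qed
qed

theorem theorem3:
  fixes a :: real and k :: nat
    and z :: "nat \<Rightarrow> complex" and r :: "nat \<Rightarrow> nat"
    and s :: "nat \<Rightarrow> nat \<Rightarrow> nat"
  assumes a_pos: "0 < a" and a_le: "a \<le> 1"
    and k_pos: "k \<ge> 1"
    and z_inj: "inj_on z {1..k}"
    and z_disc: "\<And>j. j \<in> {1..k} \<Longrightarrow> norm (z j) \<le> 1"
    and z_ne_a: "\<And>j. j \<in> {1..k} \<Longrightarrow> z j \<noteq> complex_of_real a"
    and s_bound: "\<And>n j. n \<ge> 2 \<Longrightarrow> j \<in> {1..k} \<Longrightarrow> s n j \<le> n - 1"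
    and rs_pos: "\<And>n j. n \<ge> 2 \<Longrightarrow> j \<in> {1..k} \<Longrightarrow> r j + s n j \<ge> 1"
    and r_some: "\<exists>j\<in>{1..k}. r j \<ge> 1"
    and s_lim: "\<And>j. j \<in> {1..k} \<Longrightarrow> (\<lambda>n. real (s n j) / real n) \<longlonglongrightarrow> 0"
    and crit: "\<exists>\<zeta>. norm \<zeta> \<le> 1
        \<and> deriv (\<lambda>w. (w - complex_of_real a) *
              (\<Prod>j\<in>{j\<in>{1..k}. r j \<ge> 1}. (w - z j) ^ r j)) \<zeta> = 0
        \<and> norm (complex_of_real a - \<zeta>) < 1"
  shows "\<exists>n0::nat. \<forall>n\<ge>n0. \<exists>\<zeta>. \<zeta> \<noteq> complex_of_real a
        \<and> deriv (\<lambda>w. (w - complex_of_real a) ^ n *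
              (\<Prod>j\<in>{1..k}. (w - z j) ^ (r j * n + s n j))) \<zeta> = 0
        \<and> norm (complex_of_real a - \<zeta>) < 1"
proof -
  define A where "A = complex_of_real a"
  obtain \<zeta> where near: "norm (A - \<zeta>) < 1"
    and crit_\<zeta>: "deriv (\<lambda>w. (w - A) * (\<Prod>j\<in>{j\<in>{1..k}. r j \<ge> 1}. (w - z j) ^ r j)) \<zeta> = 0"
    using crit unfolding A_def by blast
  have "\<forall>\<^sub>F n in sequentially. \<exists>\<rho>. \<rho> \<noteq> A \<and> norm (\<zeta> - \<rho>) < 1 - norm (A - \<zeta>)
      \<and> deriv (\<lambda>w. (w - A) ^ n * (\<Prod>j\<in>{1..k}. (w - z j) ^ (r j * n + s n j))) \<rho> = 0"
  proof (rule eventually_crit_point_near[OF _ _ _ _ _ crit_\<zeta>])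
    show "A \<notin> z ` {1..k}"
      unfolding A_def image_iff by (metis z_ne_a)
    show "(\<lambda>n. real (r j * n + s n j) / real n) \<longlonglongrightarrow> real (r j)" if "j \<in> {1..k}" for j
      by (rule tendsto_affine_ratio[OF s_lim[OF that]])
    have exponent_pos: "r j * n + s n j \<ge> 1" if "n \<ge> 2" "j \<in> {1..k}" for n j
      using rs_pos[OF that] that(1) by (cases "r j") auto
    show "\<forall>\<^sub>F n in sequentially. \<forall>j\<in>{1..k}. r j * n + s n j \<ge> 1"
      using eventually_ge_at_top[of 2] by eventually_elim (use exponent_pos in auto)
  qed (use near in auto)
  moreover have "norm (A - \<rho>) < 1" if "norm (\<zeta> - \<rho>) < 1 - norm (A - \<zeta>)" for \<rho>
    using dist_triangle[of A \<rho> \<zeta>] that by (simp add: dist_norm)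
  ultimately have "\<forall>\<^sub>F n in sequentially. \<exists>\<rho>. \<rho> \<noteq> A
      \<and> deriv (\<lambda>w. (w - A) ^ n * (\<Prod>j\<in>{1..k}. (w - z j) ^ (r j * n + s n j))) \<rho> = 0
      \<and> norm (A - \<rho>) < 1"
    by (elim eventually_mono) blast
  then show ?thesis
    unfolding eventually_sequentially A_def .
qed

end
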